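(* Let $N\ge 2$ and $m\ge 1$ be integers, and let $\omega_N$ denote a primitive $N$th root of unity (not needed below, fixed only for definiteness). Suppose the quantum block code $$|k\rangle\longmapsto |k_{\rm encode}\rangle=\sum_{i_1,\dots,i_m\in\mathbb Z_N} a^{(k)}_{i_1,\dots,i_m}\,|i_1,\dots,i_m\rangle,\qquad k\in\mathbb Z_N,$$ which encodes one $N$-state register into $m$ $N$-state registers, corrects the set $E$ of errors (operators on $m$ registers). Let $\mu=(\mu_{ip})_{i,p\ge 1}$ be an integer matrix each of whose rows has only finitely many nonzero entries, such that the map $\mathbb Z_N^{\mathbb Z^+}\to\mathbb Z_N^{\mathbb Z^+}$, $\mathbf k=(k_p)_{p\ge1}\mapsto\big(\sum_p\mu_{ip}k_p \bmod N\big)_{i\ge 1}$ is invertible. Define the encoding of basis states $|\mathbf k\rangle=|k_1,k_2,\dots\rangle$ ($k_p\in\mathbb Z_N$) by $$|\mathbf k\rangle\longmapsto|\mathbf k_{\rm encode}\rangle=\bigotimes_{i=1}^{+\infty}\Big[\sum_{j_{i1},\dots,j_{im}} a^{(\sum_p\mu_{ip}k_p \bmod N)}_{j_{i1},\dots,j_{im}}\,|j_{i1},\dots,j_{im}\rangle\Big],$$ i.e. the $i$-th block of $m$ output registers carries the block-encoding of $\sum_p\mu_{ip}k_p \bmod N$. Then this encoding is a quantum convolutional code of rate $1/m$ which corrects the error set $E\otimes E\otimes\cdots=\{\mathcal E_1\otimes\mathcal E_2\otimes\cdots:\mathcal E_i\in E\}$, where $\mathcal E_i$ acts on the $i$-th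 block of $m$ output registers.
   Context: Each quantum register is an $N$-state system with orthonormal computational basis $|0\rangle,\dots,|N-1\rangle$, labelled by $\mathbb Z_N$; states of (possibly infinitely many) registers are spanned by orthonormal basis states $|k_1,k_2,\dots\rangle$. An encoding is a linear map defined on computational basis states of the input registers, $|\mathbf k\rangle\mapsto|\mathbf k_{\rm encode}\rangle$. An encoding corrects (handles) a set $E$ of error operators if for all $\mathcal A,\mathcal B\in E$ and all input basis labels $\mathbf i,\mathbf j$ one has $\langle \mathbf i_{\rm encode}|\mathcal A^\dagger\mathcal B|\mathbf j_{\rm encode}\rangle=\Lambda_{\mathcal A,\mathcal B}\,\delta_{\mathbf i\mathbf j}$ for a complex constant $\Lambda_{\mathcal A,\mathcal B}$ independent of $\mathbf i,\mathbf j$. The rate of a code is the number of input registers divided by the number of output registers (per block). *)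

theory Defs
  imports Complex_Main
begin

definition basis :: "nat \<Rightarrow> nat \<Rightarrow> nat list set" where
  "basis N m = {js. length js = m \<and> set js \<subseteq> {..<N}}"

type_synonym state = "nat list \<Rightarrow> complex"
type_synonym oper = "nat list \<Rightarrow> nat list \<Rightarrow> complex"

definition apply_op :: "nat \<Rightarrow> nat \<Rightarrow> oper \<Rightarrow> state \<Rightarrow> state" where
  "apply_op N m A u = (\<lambda>y. \<Sum>x\<in>basis N m. A y x * u x)"

text \<open>Matrix element  <u| A^dagger B |v>  =  inner product of A u and B v.\<close>
definition mat_elem :: "nat \<Rightarrow> nat \<Rightarrow> state \<Rightarrow> oper \<Rightarrow> oper \<Rightarrow> state \<Rightarrow> complex" where
  "mat_elem N m u A B v =
     (\<Sum>y\<in>basis N m. cnj (apply_op N m A u y) * apply_op N m B v y)"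

definition block_corrects :: "nat \<Rightarrow> nat \<Rightarrow> (nat \<Rightarrow> state) \<Rightarrow> oper set \<Rightarrow> bool" where
  "block_corrects N m a E \<longleftrightarrow>
     (\<forall>A\<in>E. \<forall>B\<in>E. \<exists>\<Lambda>::complex. \<forall>i<N. \<forall>j<N.
        mat_elem N m (a i) A B (a j) = \<Lambda> * (if i = j then 1 else 0))"

text \<open>Input basis labels of infinitely many registers (0-based indices).\<close>
definition inputs :: "nat \<Rightarrow> (nat \<Rightarrow> nat) set" where
  "inputs N = {k. \<forall>p. k p < N}"

definition mu_map :: "nat \<Rightarrow> (nat \<Rightarrow> nat \<Rightarrow> int) \<Rightarrow> (nat \<Rightarrow> nat) \<Rightarrow> nat \<Rightarrow> nat" where
  "mu_map N \<mu> k i = nat ((\<Sum>p\<in>{p. \<mu> i p \<noteq> 0}. \<mu> i p * int (k p)) mod int N)"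

text \<open>The convolutional encoding: block i of |k_encode> is the block state a (mu_map k i);
  |k_encode> is the infinite tensor product of these block states.\<close>
definition conv_encode :: "nat \<Rightarrow> (nat \<Rightarrow> state) \<Rightarrow> (nat \<Rightarrow> nat \<Rightarrow> int) \<Rightarrow> (nat \<Rightarrow> nat) \<Rightarrow> nat \<Rightarrow> state" where
  "conv_encode N a \<mu> k i = a (mu_map N \<mu> k i)"

text \<open>Matrix element of (\<otimes>_i As i)^dagger (\<otimes>_i Bs i) between infinite product states
  \<otimes>_i u i and \<otimes>_i v i, truncated to the first n blocks (finite partial product).\<close>
definition partial_elem :: "nat \<Rightarrow> nat \<Rightarrow> (nat \<Rightarrow> state) \<Rightarrow> (nat \<Rightarrow> oper) \<Rightarrow> (nat \<Rightarrow> oper)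
    \<Rightarrow> (nat \<Rightarrow> state) \<Rightarrow> nat \<Rightarrow> complex" where
  "partial_elem N m u As Bs v n = (\<Prod>i<n. mat_elem N m (u i) (As i) (Bs i) (v i))"

text \<open>An encoding of infinitely many input registers into blocks of m registers corrects
  E \<otimes> E \<otimes> ... : for all error sequences As, Bs in E there is Lambda (an infinite product,
  represented by its sequence of partial products) independent of the inputs such that the
  matrix elements equal Lambda * delta, as infinite products (partial products eventually agree).\<close>
definition conv_corrects :: "nat \<Rightarrow> nat \<Rightarrow> ((nat \<Rightarrow> nat) \<Rightarrow> nat \<Rightarrow> state) \<Rightarrow> oper set \<Rightarrow> bool" where
  "conv_corrects N m enc E \<longleftrightarrow>
     (\<forall>As Bs. (\<forall>i. As i \<in> E) \<longrightarrow> (\<forall>i. Bs i \<in> E) \<longrightarrow>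
       (\<exists>\<Lambda>::nat \<Rightarrow> complex. \<forall>k\<in>inputs N. \<forall>k'\<in>inputs N.
          eventually (\<lambda>n. partial_elem N m (enc k) As Bs (enc k') n
                          = \<Lambda> n * (if k = k' then 1 else 0)) sequentially))"

end

theory Submission
  imports Defs
begin

text \<open>The matrix element of a product error between product states factorises over the
  blocks, and by the block condition each factor is a constant times a Kronecker delta of
  the two block symbols. Since the symbol map \<open>mu_map N \<mu>\<close> is injective, two distinct
  inputs differ in the symbol of some block, and every partial product containing that
  block vanishes.\<close>

lemma mu_map_less: "0 < N \<Longrightarrow> mu_map N \<mu> k i < N"
  unfolding mu_map_def by (simp add: nat_less_iff)

lemma block_correctsE:
  assumes "block_corrects N m a E"
  obtains \<Lambda> :: "oper \<Rightarrow> oper \<Rightarrow> complex"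
  where "\<And>A B i j. A \<in> E \<Longrightarrow> B \<in> E \<Longrightarrow> i < N \<Longrightarrow> j < N \<Longrightarrow>
           mat_elem N m (a i) A B (a j) = \<Lambda> A B * (if i = j then 1 else 0)"
  using assms unfolding block_corrects_def by metis

lemma partial_elem_block_code:
  assumes "\<And>A B i j. A \<in> E \<Longrightarrow> B \<in> E \<Longrightarrow> i < N \<Longrightarrow> j < N \<Longrightarrow>
             mat_elem N m (a i) A B (a j) = \<Lambda> A B * (if i = j then 1 else 0)"
    and "\<And>i. As i \<in> E" and "\<And>i. Bs i \<in> E"
    and "\<And>i. s i < N" and "\<And>i. t i < N"
  shows "partial_elem N m (\<lambda>i. a (s i)) As Bs (\<lambda>i. a (t i)) n
           = (\<Prod>i<n. \<Lambda> (As i) (Bs i)) * (if \<forall>i<n. s i = t i then 1 else 0)"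
proof -
  have "partial_elem N m (\<lambda>i. a (s i)) As Bs (\<lambda>i. a (t i)) n
          = (\<Prod>i<n. \<Lambda> (As i) (Bs i) * (if s i = t i then 1 else 0))"
    unfolding partial_elem_def using assms by simp
  also have "\<dots> = (\<Prod>i<n. \<Lambda> (As i) (Bs i)) * (\<Prod>i<n. if s i = t i then 1 else 0)"
    by (rule prod.distrib)
  also have "(\<Prod>i<n. if s i = t i then 1 else 0 :: complex)
               = (if \<forall>i<n. s i = t i then 1 else 0)"
    by (auto simp add: prod_zero_iff)
  finally show ?thesis .
qed

lemma conv_corrects_block_code:
  fixes symbol :: "(nat \<Rightarrow> nat) \<Rightarrow> nat \<Rightarrow> nat"
  assumes "block_corrects N m a E"
    and "inj_on symbol (inputs N)"
    and "\<And>k i. symbol k i < N"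
  shows "conv_corrects N m (\<lambda>k i. a (symbol k i)) E"
  unfolding conv_corrects_def
proof (intro allI impI)
  fix As Bs :: "nat \<Rightarrow> oper"
  assume "\<forall>i. As i \<in> E" and "\<forall>i. Bs i \<in> E"
  obtain \<Lambda> where block: "\<And>A B i j. A \<in> E \<Longrightarrow> B \<in> E \<Longrightarrow> i < N \<Longrightarrow> j < N \<Longrightarrow>
           mat_elem N m (a i) A B (a j) = \<Lambda> A B * (if i = j then 1 else 0)"
    using block_correctsE[OF assms(1)] by blast
  have product: "partial_elem N m (\<lambda>i. a (symbol k i)) As Bs (\<lambda>i. a (symbol k' i)) n
      = (\<Prod>i<n. \<Lambda> (As i) (Bs i)) * (if \<forall>i<n. symbol k i = symbol k' i then 1 else 0)" for k k' n
    using \<open>\<forall>i. As i \<in> E\<close> \<open>\<forall>i. Bs i \<in> E\<close> assms(3)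
    by (intro partial_elem_block_code[OF block]) auto
  have "eventually (\<lambda>n. partial_elem N m (\<lambda>i. a (symbol k i)) As Bs (\<lambda>i. a (symbol k' i)) n
          = (\<Prod>i<n. \<Lambda> (As i) (Bs i)) * (if k = k' then 1 else 0)) sequentially"
    if k: "k \<in> inputs N" and k': "k' \<in> inputs N" for k k'
  proof (cases "k = k'")
    case True
    then show ?thesis
      by (simp add: product)
  next
    case False
    have "symbol k \<noteq> symbol k'"
      using inj_on_contraD[OF assms(2) False k k'] .
    then obtain i0 where i0: "symbol k i0 \<noteq> symbol k' i0"
      by auto
    have "partial_elem N m (\<lambda>i. a (symbol k i)) As Bs (\<lambda>i. a (symbol k' i)) n = 0"
      if "Suc i0 \<le> n" for n
    proof -
      have "\<not> (\<forall>i<n. symbol k i = symbol k' i)"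
        using i0 that Suc_le_lessD by blast
      then show ?thesis
        by (simp only: product if_False mult_zero_right)
    qed
    then show ?thesis
      using False unfolding eventually_sequentially by (intro exI[of _ "Suc i0"]) simp
  qed
  then show "\<exists>\<Lambda>. \<forall>k\<in>inputs N. \<forall>k'\<in>inputs N. eventually (\<lambda>n.
               partial_elem N m (\<lambda>i. a (symbol k i)) As Bs (\<lambda>i. a (symbol k' i)) n
                 = \<Lambda> n * (if k = k' then 1 else 0)) sequentially"
    by (intro exI[of _ "\<lambda>n. \<Prod>i<n. \<Lambda> (As i) (Bs i)"] ballI)
qed

theorem theorem1:
  fixes N m :: nat and a :: "nat \<Rightarrow> state" and E :: "oper set"
    and \<mu> :: "nat \<Rightarrow> nat \<Rightarrow> int"
  assumes "N \<ge> 2" and "m \<ge> 1"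
    and "block_corrects N m a E"
    and "\<And>i. finite {p. \<mu> i p \<noteq> 0}"
    and "bij_betw (mu_map N \<mu>) (inputs N) (inputs N)"
  shows "conv_corrects N m (conv_encode N a \<mu>) E"
proof -
  have "conv_encode N a \<mu> = (\<lambda>k i. a (mu_map N \<mu> k i))"
    by (simp add: conv_encode_def fun_eq_iff)
  moreover have "inj_on (mu_map N \<mu>) (inputs N)"
    using assms(5) by (rule bij_betw_imp_inj_on)
  moreover have "\<And>k i. mu_map N \<mu> k i < N"
    using assms(1) by (simp add: mu_map_less)
  ultimately show ?thesis
    using assms(3) by (simp add: conv_corrects_block_code)
qed

end
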